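(* Let $a,b,c,d$ be integers with $1=a\le b\le c\le d$ and let $$M=\begin{bmatrix}a&-1&-1&-1\\-1&b&-1&-1\\-1&-1&c&-1\\-1&-1&-1&d\end{bmatrix}.$$ If $\det M=0$, then $b\le5$. Moreover: if $b=3$ and $c\ge7$, then $c=d=7$; if $b=4$, then $c=4$ and $d=9$; if $b=5$, then $c=d=5$. *)

theory Defs
  imports "HOL-Analysis.Analysis"
begin

definition diag_minus_one_mat :: "int \<Rightarrow> int \<Rightarrow> int \<Rightarrow> int \<Rightarrow> int^4^4" where
  "diag_minus_one_mat a b c d =
     (\<chi> i j. if i = j then (if i = 1 then a else if i = 2 then b else if i = 3 then c else d)
             else -1)"

end

theory Submission imports Defs begin

text \<open>Writing \<open>x\<^sub>i = a\<^sub>i + 1\<close>, the matrix is \<open>diag x - J\<close> with \<open>J\<close> the all-ones matrix, so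
  \<open>det = x\<^sub>1x\<^sub>2x\<^sub>3x\<^sub>4 (1 - \<Sum> 1/x\<^sub>i)\<close> and a singular matrix with \<open>a = 1\<close> gives
  \<open>1/(b+1) + 1/(c+1) + 1/(d+1) = 1/2\<close>. The smallest of three positive unit fractions with
  sum \<open>1/q\<close> has denominator at most \<open>3q\<close>, and once it is fixed, the smaller of the remaining two
  is bounded likewise; the few candidates left are checked directly.\<close>

lemma det_diag_minus_one_mat:
  "det (diag_minus_one_mat a b c d) =
     (a+1)*(b+1)*(c+1)*(d+1)
     - ((a+1)*(b+1)*(c+1) + (a+1)*(b+1)*(d+1) + (a+1)*(c+1)*(d+1) + (b+1)*(c+1)*(d+1))"
proof -
  have "finite {2::4, 3, 4}" "1 \<notin> {2::4, 3, 4}"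
   and "finite {3::4, 4}" "2 \<notin> {3::4, 4}"
   and "finite {4::4}" "3 \<notin> {4::4}" by auto
  note expand = sum_over_permutations_insert[OF this(1,2)] sum_over_permutations_insert[OF this(3,4)]
    sum_over_permutations_insert[OF this(5,6)]
  show ?thesis
    unfolding det_def UNIV_4 expand permutes_sing
    by (simp add: sign_swap_id permutation_swap_id sign_compose permutation_compose sign_id
        swap_id_eq diag_minus_one_mat_def algebra_simps)
qed

lemma unit_fraction_pair_bound:
  fixes p q y z :: "'a::linordered_idom"
  assumes "0 < y" "y \<le> z" "0 \<le> q" and eq: "p * (y * z) = q * (y + z)"
  shows "p * y \<le> 2 * q"
proof -
  have "(p * y) * z = q * y + q * z" using eq by (simp add: algebra_simps)
  also have "\<dots> \<le> (2 * q) * z" using assms by (simp add: mult_left_mono algebra_simps)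
  finally show ?thesis using assms by simp
qed

lemma unit_fraction_triple_bound:
  fixes q x y z :: "'a::linordered_idom"
  assumes "0 < x" "x \<le> y" "y \<le> z" "0 \<le> q" and eq: "x * y * z = q * (x * y + x * z + y * z)"
  shows "x \<le> 3 * q"
proof -
  have "x * y \<le> y * z" "x * z \<le> y * z" using assms by (simp_all add: mult_right_mono)
  then have "q * (x * y + x * z + y * z) \<le> q * (3 * (y * z))"
    using \<open>0 \<le> q\<close> by (intro mult_left_mono) simp_all
  then have "x * (y * z) \<le> (3 * q) * (y * z)" using eq by (simp add: algebra_simps)
  moreover have "0 < y * z" using assms by simp
  ultimately show ?thesis by (simp add: mult_le_cancel_right)
qed

lemma egyptian_half_triples:
  fixes x y z :: int
  assumes "0 < x" "x \<le> y" "y \<le> z" and eq: "x * y * z = 2 * (x * y + x * z + y * z)"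
  shows "x \<le> 6"
    and "x = 4 \<Longrightarrow> 8 \<le> y \<Longrightarrow> y = 8 \<and> z = 8"
    and "x = 5 \<Longrightarrow> y = 5 \<and> z = 10"
    and "x = 6 \<Longrightarrow> y = 6 \<and> z = 6"
proof -
  have "0 < y" using assms by simp
  note pair_bound = unit_fraction_pair_bound[OF this \<open>y \<le> z\<close>]
  show "x \<le> 6" using unit_fraction_triple_bound[OF assms(1-3) _ eq] by simp
  show "y = 8 \<and> z = 8" if "x = 4" "8 \<le> y"
  proof -
    have "y * z = 4 * (y + z)" using eq that(1) by (simp add: algebra_simps)
    then have "y \<le> 8" using pair_bound[of 4 1] by simp
    then show ?thesis using that \<open>y * z = 4 * (y + z)\<close> by simp
  qed
  show "y = 5 \<and> z = 10" if "x = 5"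
  proof -
    have "3 * (y * z) = 10 * (y + z)" using eq that by (simp add: algebra_simps)
    then have "y = 5 \<or> y = 6" using pair_bound[of 10 3] that assms by linarith
    then show ?thesis using \<open>3 * (y * z) = 10 * (y + z)\<close> by presburger
  qed
  show "y = 6 \<and> z = 6" if "x = 6"
  proof -
    have "y * z = 3 * (y + z)" using eq that by (simp add: algebra_simps)
    then have "y \<le> 6" using pair_bound[of 3 1] by simp
    then show ?thesis using that assms \<open>y * z = 3 * (y + z)\<close> by simp
  qed
qed

theorem lemma3p7:
  fixes a b c d :: int
  assumes "1 = a" and "a \<le> b" and "b \<le> c" and "c \<le> d"
    and "det (diag_minus_one_mat a b c d) = 0"
  shows "b \<le> 5
    \<and> (b = 3 \<and> c \<ge> 7 \<longrightarrow> c = 7 \<and> d = 7)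
    \<and> (b = 4 \<longrightarrow> c = 4 \<and> d = 9)
    \<and> (b = 5 \<longrightarrow> c = 5 \<and> d = 5)"
proof -
  have "(b+1) * (c+1) * (d+1) = 2 * ((b+1) * (c+1) + (b+1) * (d+1) + (c+1) * (d+1))"
    using assms(5) unfolding det_diag_minus_one_mat \<open>1 = a\<close>[symmetric] by (simp add: algebra_simps)
  moreover have "0 < b + 1" "b + 1 \<le> c + 1" "c + 1 \<le> d + 1" using assms by simp_all
  ultimately show ?thesis using egyptian_half_triples[of "b+1" "c+1" "d+1"] by auto
qed

end
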